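(* Consider the dynamic trial-offer market with social influence under the quality ranking with $n=2$ products, visibilities $v_1\ge v_2>0$, initial appeals $A_1,A_2>0$ and qualities $1\ge q_1>q_2\ge 0$. Then almost surely $\frac{d_{1,t}}{d_{1,t}+d_{2,t}}\to 1$ as $t\to\infty$, i.e. the market converges almost surely to a monopoly for product 1.
   Context: Dynamic trial-offer market with social influence under the quality ranking: products $1,\dots,n$ with initial appeals $A_i>0$, qualities $q_i\in[0,1]$, and product $i$ permanently displayed in position $i$ with visibility $v_i>0$. Let $d_{i,t}$ be the number of purchases of product $i$ before step $t$ ($d_{i,1}=0$) and $a_{i,t}=A_i+d_{i,t}$. At step $t$ one participant tries product $i$ with probability $\frac{v_i a_{i,t}}{\sum_j v_j a_{j,t}}$, then purchases it with probability $q_i$ (independently); if purchased, $d_{i,t+1}=d_{i,t}+1$, all other counts unchanged. The market share of product $i$ at step $t$ is $d_{i,t}/\sum_j d_{j,t}$ (defined once some purchase has occurred). *)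

theory Defs
  imports "HOL-Probability.Probability"
begin

text \<open>Two-product trial-offer market under the quality ranking (product i in position i).
  The randomness of step t is given by a pair (u,w) of independent uniform [0,1] variables:
  product 1 is tried iff u < v1 a1 / (v1 a1 + v2 a2), otherwise product 2 is tried;
  the tried product i is purchased iff w < q_i.\<close>

definition market_noise :: "(real \<times> real) measure" where
  "market_noise = uniform_measure lborel {0..1} \<Otimes>\<^sub>M uniform_measure lborel {0..1}"

fun market_step ::
  "real \<Rightarrow> real \<Rightarrow> real \<Rightarrow> real \<Rightarrow> real \<Rightarrow> real \<Rightarrow> nat \<times> nat \<Rightarrow> real \<times> real \<Rightarrow> nat \<times> nat" where
  "market_step v1 v2 A1 A2 q1 q2 (d1, d2) (u, w) =
     (let a1 = A1 + real d1; a2 = A2 + real d2 in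
      if u < v1 * a1 / (v1 * a1 + v2 * a2)
      then (if w < q1 then (Suc d1, d2) else (d1, d2))
      else (if w < q2 then (d1, Suc d2) else (d1, d2)))"

text \<open>purchase counts (d_1, d_2) after t steps, i.e. (d_{1,t+1}, d_{2,t+1}) in the paper's indexing.\<close>
fun market_counts ::
  "real \<Rightarrow> real \<Rightarrow> real \<Rightarrow> real \<Rightarrow> real \<Rightarrow> real \<Rightarrow> (real \<times> real) stream \<Rightarrow> nat \<Rightarrow> nat \<times> nat" where
  "market_counts v1 v2 A1 A2 q1 q2 \<omega> 0 = (0, 0)"
| "market_counts v1 v2 A1 A2 q1 q2 \<omega> (Suc t) =
     market_step v1 v2 A1 A2 q1 q2 (market_counts v1 v2 A1 A2 q1 q2 \<omega> t) (\<omega> !! t)"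

end

theory Submission
  imports Defs
begin

text \<open>
  Write \<open>w\<^sub>i = v\<^sub>i q\<^sub>i\<close>, so \<open>w\<^sub>1 > w\<^sub>2\<close>.  The function
  \<open>V(d\<^sub>1, d\<^sub>2) = (A\<^sub>2 + d\<^sub>2)\<^bsup>\<rho>\<^esup> g(d\<^sub>1)\<close>, with \<open>g(d) \<approx> (A\<^sub>1 + d)\<^bsup>-\<gamma>\<^esup>\<close> and
  \<open>0 < \<gamma> < \<rho> \<le> 1\<close>, is a nonnegative supermartingale along the market: a purchase of product 2
  multiplies \<open>V\<close> by at most \<open>1 + \<rho>/a\<^sub>2\<close>, a purchase of product 1 by at most \<open>1 - \<theta>/a\<^sub>1\<close>, and
  \<open>\<theta> = w\<^sub>2\<rho>/w\<^sub>1 < \<gamma>\<close> is chosen so that these two drifts cancel exactly.  By the maximal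
  inequality \<open>V\<close> stays bounded on almost every path, and since every state is left with positive
  probability, almost every path moves infinitely often.  On such a path \<open>d\<^sub>1\<close> must diverge
  (otherwise \<open>g(d\<^sub>1)\<close> stays bounded below and the bound on \<open>V\<close> caps \<open>d\<^sub>2\<close> as well), and then the
  bound on \<open>V\<close> gives \<open>d\<^sub>2 = O(d\<^sub>1\<^bsup>\<gamma>/\<rho>\<^esup>)\<close>, so the share of product 1 tends to 1.
\<close>

lemma ex_le_Suc_iff: "(\<exists>t\<le>Suc n. P t) \<longleftrightarrow> P 0 \<or> (\<exists>t\<le>n. P (Suc t))"
  by (auto simp: less_Suc_eq_0_disj simp flip: less_Suc_eq_le)

lemma all_le_Suc_iff: "(\<forall>t\<le>Suc n. P t) \<longleftrightarrow> P 0 \<and> (\<forall>t\<le>n. P (Suc t))"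
  by (auto simp: less_Suc_eq_0_disj simp flip: less_Suc_eq_le)

lemma all_ge_Suc_iff: "(\<forall>t\<ge>Suc T. P t) \<longleftrightarrow> (\<forall>t\<ge>T. P (Suc t))"
  by (metis Suc_le_D Suc_le_mono)

lemma powr_le_Bernoulli:
  fixes y r :: real
  assumes "-1 < y" "0 \<le> r" "r \<le> 1"
  shows "(1 + y) powr r \<le> 1 + r * y"
  using Youngs_inequality_0[of r "1 - r" "1 + y" 1] assms by (simp add: algebra_simps)

lemma share_tendsto_1:
  fixes x y :: "nat \<Rightarrow> real"
  assumes x: "filterlim x at_top sequentially"
    and y: "eventually (\<lambda>t. 0 \<le> y t \<and> y t \<le> K * x t powr \<beta>) sequentially" and "\<beta> < 1"
  shows "(\<lambda>t. x t / (x t + y t)) \<longlonglongrightarrow> 1"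
proof -
  have "eventually (\<lambda>t. 1 \<le> x t) sequentially"
    using x unfolding filterlim_at_top by blast
  with y have ev: "eventually (\<lambda>t. 1 \<le> x t \<and> 0 \<le> y t \<and> y t \<le> K * x t powr \<beta>) sequentially"
    by eventually_elim auto
  have "(\<lambda>t. K * x t powr (\<beta> - 1)) \<longlonglongrightarrow> K * 0"
    using \<open>\<beta> < 1\<close> by (intro tendsto_mult tendsto_const tendsto_neg_powr x) simp
  then have upper_lim: "(\<lambda>t. K * x t powr (\<beta> - 1)) \<longlonglongrightarrow> 0"
    by simp
  have upper: "eventually (\<lambda>t. y t / (x t + y t) \<le> K * x t powr (\<beta> - 1)) sequentially"
    using ev
  proof eventually_elim
    case (elim t)
    then have "y t / (x t + y t) \<le> y t / x t"
      by (intro divide_left_mono) auto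
    also have "\<dots> \<le> K * x t powr \<beta> / x t"
      using elim by (intro divide_right_mono) auto
    finally show ?case
      using elim by (simp add: powr_diff)
  qed
  have lower: "eventually (\<lambda>t. 0 \<le> y t / (x t + y t)) sequentially"
    using ev by eventually_elim simp
  have "(\<lambda>t. y t / (x t + y t)) \<longlonglongrightarrow> 0"
    by (rule tendsto_sandwich[OF lower upper tendsto_const upper_lim])
  then have "(\<lambda>t. 1 - y t / (x t + y t)) \<longlonglongrightarrow> 1"
    using tendsto_diff[OF tendsto_const[of 1]] by fastforce
  moreover have "eventually (\<lambda>t. 1 - y t / (x t + y t) = x t / (x t + y t)) sequentially"
    using ev
  proof eventually_elim
    case (elim t)
    then have "x t + y t \<noteq> 0" by linarith
    then show ?case by (simp add: field_simps)
  qed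
  ultimately show ?thesis
    by (rule Lim_transform_eventually)
qed

lemma incseq_pair_sum_unbounded:
  fixes x y :: "nat \<Rightarrow> nat"
  assumes "incseq x" "incseq y" and moving: "\<forall>T. \<exists>t\<ge>T. (x t, y t) \<noteq> (x T, y T)"
  shows "\<exists>t. k \<le> x t + y t"
proof (induction k)
  case (Suc k)
  then obtain T where T: "k \<le> x T + y T" by blast
  obtain t where "T \<le> t" "(x t, y t) \<noteq> (x T, y T)" using moving by blast
  moreover from \<open>T \<le> t\<close> have "x T \<le> x t" "y T \<le> y t"
    using assms by (auto simp: incseq_def)
  ultimately have "x T + y T < x t + y t" by auto
  with T show ?case by (intro exI[of _ t]) simp
qed simp

lemma (in prob_space) emeasure_stream_space_Cons:
  assumes "{\<omega>\<in>space (stream_space M). Q \<omega>} \<in> sets (stream_space M)"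
  shows "emeasure (stream_space M) {\<omega>\<in>space (stream_space M). Q \<omega>} =
    (\<integral>\<^sup>+y. emeasure (stream_space M) {\<omega>\<in>space (stream_space M). Q (y ## \<omega>)} \<partial>M)"
  by (subst emeasure_stream_space[OF assms])
     (auto intro!: nn_integral_cong arg_cong[where f="emeasure (stream_space M)"]
       simp: space_stream_space streams_Stream)

section \<open>Iterated random maps\<close>

locale random_map_iteration = prob_space M
  for M :: "'a measure" and f :: "'s::countable \<Rightarrow> 'a \<Rightarrow> 's" +
  assumes measurable_random_map[measurable]: "f s \<in> M \<rightarrow>\<^sub>M count_space UNIV"
begin

abbreviation S :: "'a stream measure" where "S \<equiv> stream_space M"

fun orbit :: "'s \<Rightarrow> 'a stream \<Rightarrow> nat \<Rightarrow> 's" where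
  "orbit s \<omega> 0 = s"
| "orbit s \<omega> (Suc t) = f (orbit s \<omega> t) (\<omega> !! t)"

lemma orbit_Cons_Suc: "orbit s (y ## \<omega>) (Suc t) = orbit (f s y) \<omega> t"
  by (induction t) auto

lemma measurable_orbit[measurable]: "(\<lambda>\<omega>. orbit s \<omega> t) \<in> S \<rightarrow>\<^sub>M count_space UNIV"
proof (induction t)
  case (Suc t)
  have "(\<lambda>\<omega>. f (orbit s \<omega> t) (\<omega> !! t)) \<in> S \<rightarrow>\<^sub>M count_space UNIV"
    by (rule measurable_compose_countable[OF _ Suc]) measurable
  then show ?case by simp
qed simp

interpretation S: prob_space S
  by (rule prob_space_stream_space)

lemma pred_orbit[measurable]: "Measurable.pred S (\<lambda>\<omega>. P (orbit s \<omega> t))"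
  using measurable_compose[OF measurable_orbit, of "\<lambda>x. P x"] by simp

lemma pred_orbit_eq[measurable]: "Measurable.pred S (\<lambda>\<omega>. orbit s \<omega> t = orbit s \<omega> T)"
  by (rule measurable_compose_countable[where f="\<lambda>i \<omega>. orbit s \<omega> t = i", OF pred_orbit measurable_orbit])

lemma sets_reach: "{\<omega>\<in>space S. \<exists>t\<le>n. c \<le> V (orbit s \<omega> t)} \<in> sets S"
  by measurable

lemma sets_stay: "{\<omega>\<in>space S. \<forall>t\<le>n. orbit s \<omega> t = s} \<in> sets S"
  by measurable

lemma sets_eventually_const: "{\<omega>\<in>space S. \<forall>t\<ge>T. orbit s \<omega> t = orbit s \<omega> T} \<in> sets S"
  by measurable

text \<open>Ville's maximal inequality for the nonnegative supermartingale \<open>V (orbit s \<omega> t)\<close>.\<close>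

lemma emeasure_reach_le:
  fixes V :: "'s \<Rightarrow> real" and c :: real
  assumes nonneg: "\<And>s. 0 \<le> V s" and "0 < c"
    and super: "\<And>s. (\<integral>\<^sup>+y. ennreal (V (f s y)) \<partial>M) \<le> ennreal (V s)"
  shows "emeasure S {\<omega>\<in>space S. \<exists>t\<le>n. c \<le> V (orbit s \<omega> t)} \<le> ennreal (V s / c)"
proof -
  have above: "emeasure S A \<le> ennreal (V s / c)" if "c \<le> V s" for A s
  proof -
    have "1 \<le> ennreal (V s / c)"
      using that \<open>0 < c\<close> by (simp add: ennreal_1[symmetric] del: ennreal_1)
    then show ?thesis by (rule order_trans[OF S.emeasure_le_1])
  qed
  show ?thesis
  proof (induction n arbitrary: s)
    case 0
    show ?case using above by (cases "c \<le> V s") auto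
  next
    case (Suc n)
    show ?case
    proof (cases "c \<le> V s")
      case True
      then show ?thesis by (rule above)
    next
      case False
      have shift: "(\<exists>t\<le>Suc n. c \<le> V (orbit s (y ## \<omega>) t)) \<longleftrightarrow> (\<exists>t\<le>n. c \<le> V (orbit (f s y) \<omega> t))"
        for y \<omega>
        using False by (simp add: ex_le_Suc_iff orbit_Cons_Suc del: orbit.simps(2))
      have "emeasure S {\<omega>\<in>space S. \<exists>t\<le>Suc n. c \<le> V (orbit s \<omega> t)}
          = (\<integral>\<^sup>+y. emeasure S {\<omega>\<in>space S. \<exists>t\<le>Suc n. c \<le> V (orbit s (y ## \<omega>) t)} \<partial>M)"
        by (rule emeasure_stream_space_Cons) (rule sets_reach)
      also have "\<dots> = (\<integral>\<^sup>+y. emeasure S {\<omega>\<in>space S. \<exists>t\<le>n. c \<le> V (orbit (f s y) \<omega> t)} \<partial>M)"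
        by (simp only: shift)
      also have "\<dots> \<le> (\<integral>\<^sup>+y. ennreal (V (f s y)) / ennreal c \<partial>M)"
        using \<open>0 < c\<close> nonneg by (intro nn_integral_mono order_trans[OF Suc.IH]) (simp add: divide_ennreal)
      also have "\<dots> \<le> ennreal (V s) / ennreal c"
        by (simp add: nn_integral_divide divide_right_mono_ennreal super)
      finally show ?thesis
        using \<open>0 < c\<close> nonneg by (simp add: divide_ennreal)
    qed
  qed
qed

lemma AE_orbit_bounded:
  fixes V :: "'s \<Rightarrow> real"
  assumes nonneg: "\<And>s. 0 \<le> V s"
    and super: "\<And>s. (\<integral>\<^sup>+y. ennreal (V (f s y)) \<partial>M) \<le> ennreal (V s)"
  shows "AE \<omega> in S. \<exists>B. \<forall>t. V (orbit s \<omega> t) < B"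
proof -
  let ?reach = "\<lambda>c n. {\<omega>\<in>space S. \<exists>t\<le>n. c \<le> V (orbit s \<omega> t)}"
  let ?unbounded = "{\<omega>\<in>space S. \<forall>k::nat. \<exists>t. real (Suc k) \<le> V (orbit s \<omega> t)}"
  have bound: "emeasure S ?unbounded \<le> ennreal (V s / real (Suc k))" for k
  proof -
    have "?unbounded \<subseteq> (\<Union>n. ?reach (Suc k) n)"
      by blast
    then have "emeasure S ?unbounded \<le> emeasure S (\<Union>n. ?reach (Suc k) n)"
      by (intro emeasure_mono) measurable
    also have "\<dots> = (SUP n. emeasure S (?reach (Suc k) n))"
      by (rule SUP_emeasure_incseq[symmetric]) (auto simp: sets_reach incseq_def intro: order_trans)
    also have "\<dots> \<le> ennreal (V s / real (Suc k))"
      by (intro SUP_least emeasure_reach_le nonneg super) simp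
    finally show ?thesis .
  qed
  have "(\<lambda>k. ennreal (V s / real (Suc k))) \<longlonglongrightarrow> ennreal 0"
    by (intro tendsto_ennrealI LIMSEQ_Suc[OF lim_const_over_n])
  then have "emeasure S ?unbounded \<le> ennreal 0"
    by (rule LIMSEQ_le_const) (use bound in auto)
  then have "?unbounded \<in> null_sets S"
    by (auto simp: null_sets_def)
  then show ?thesis
    by (rule AE_I') (auto simp: not_less)
qed

lemma emeasure_stay_le:
  "emeasure S {\<omega>\<in>space S. \<forall>t\<le>n. orbit s \<omega> t = s} \<le> ennreal (prob {y\<in>space M. f s y = s} ^ n)"
proof (induction n)
  case 0
  show ?case using S.emeasure_le_1 by simp
next
  case (Suc n)
  let ?p = "prob {y\<in>space M. f s y = s}" and ?fix = "{y\<in>space M. f s y = s}"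
  have shift: "(\<forall>t\<le>Suc n. orbit s (y ## \<omega>) t = s) \<longleftrightarrow> (\<forall>t\<le>n. orbit (f s y) \<omega> t = s)" for y \<omega>
    by (simp add: all_le_Suc_iff orbit_Cons_Suc del: orbit.simps(2))
  have stay_from: "emeasure S {\<omega>\<in>space S. \<forall>t\<le>n. orbit (f s y) \<omega> t = s} \<le> ennreal (?p ^ n) * indicator ?fix y"
    if "y \<in> space M" for y
  proof (cases "f s y = s")
    case False
    then have "{\<omega>\<in>space S. \<forall>t\<le>n. orbit (f s y) \<omega> t = s} = {}"
      by (auto dest: spec[of _ 0])
    then have "emeasure S {\<omega>\<in>space S. \<forall>t\<le>n. orbit (f s y) \<omega> t = s} = 0"
      by (simp only: emeasure_empty)
    then show ?thesis by simp
  qed (use Suc.IH that in simp)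
  have "emeasure S {\<omega>\<in>space S. \<forall>t\<le>Suc n. orbit s \<omega> t = s}
      = (\<integral>\<^sup>+y. emeasure S {\<omega>\<in>space S. \<forall>t\<le>Suc n. orbit s (y ## \<omega>) t = s} \<partial>M)"
    by (rule emeasure_stream_space_Cons) (rule sets_stay)
  also have "\<dots> \<le> (\<integral>\<^sup>+y. ennreal (?p ^ n) * indicator ?fix y \<partial>M)"
    unfolding shift by (rule nn_integral_mono) (rule stay_from)
  also have "\<dots> = ennreal (?p ^ n) * emeasure M ?fix"
    by (rule nn_integral_cmult_indicator) measurable
  also have "\<dots> = ennreal (?p ^ Suc n)"
    by (simp add: emeasure_eq_measure ennreal_mult'' mult.commute)
  finally show ?case .
qed

lemma emeasure_stay_forever:
  assumes "prob {y\<in>space M. f s y = s} < 1"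
  shows "emeasure S {\<omega>\<in>space S. \<forall>t. orbit s \<omega> t = s} = 0"
proof -
  let ?p = "prob {y\<in>space M. f s y = s}"
  have "emeasure S {\<omega>\<in>space S. \<forall>t. orbit s \<omega> t = s} \<le> ennreal (?p ^ n)" for n
    by (rule order_trans[OF emeasure_mono emeasure_stay_le]) (auto simp: sets_stay)
  moreover have "(\<lambda>n. ennreal (?p ^ n)) \<longlonglongrightarrow> ennreal 0"
    by (intro tendsto_ennrealI LIMSEQ_realpow_zero assms measure_nonneg)
  ultimately have "emeasure S {\<omega>\<in>space S. \<forall>t. orbit s \<omega> t = s} \<le> ennreal 0"
    by (intro LIMSEQ_le_const) auto
  then show ?thesis by simp
qed

lemma emeasure_eventually_const:
  assumes moves: "\<And>s. prob {y\<in>space M. f s y = s} < 1"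
  shows "emeasure S {\<omega>\<in>space S. \<forall>t\<ge>T. orbit s \<omega> t = orbit s \<omega> T} = 0"
proof (induction T arbitrary: s)
  case 0
  show ?case using emeasure_stay_forever[OF moves] by simp
next
  case (Suc T)
  have shift: "(\<forall>t\<ge>Suc T. orbit s (y ## \<omega>) t = orbit s (y ## \<omega>) (Suc T))
      \<longleftrightarrow> (\<forall>t\<ge>T. orbit (f s y) \<omega> t = orbit (f s y) \<omega> T)" for y \<omega>
    by (simp add: all_ge_Suc_iff orbit_Cons_Suc del: orbit.simps(2))
  have "emeasure S {\<omega>\<in>space S. \<forall>t\<ge>Suc T. orbit s \<omega> t = orbit s \<omega> (Suc T)}
      = (\<integral>\<^sup>+y. emeasure S {\<omega>\<in>space S. \<forall>t\<ge>T. orbit (f s y) \<omega> t = orbit (f s y) \<omega> T} \<partial>M)"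
    unfolding emeasure_stream_space_Cons[OF sets_eventually_const] shift ..
  then show ?case by (simp add: Suc.IH)
qed

lemma AE_orbit_not_eventually_const:
  assumes "\<And>s. prob {y\<in>space M. f s y = s} < 1"
  shows "AE \<omega> in S. \<forall>T. \<exists>t\<ge>T. orbit s \<omega> t \<noteq> orbit s \<omega> T"
proof (subst AE_all_countable, intro allI)
  fix T
  show "AE \<omega> in S. \<exists>t\<ge>T. orbit s \<omega> t \<noteq> orbit s \<omega> T"
  proof (rule AE_I')
    show "{\<omega>\<in>space S. \<forall>t\<ge>T. orbit s \<omega> t = orbit s \<omega> T} \<in> null_sets S"
      by (rule null_setsI[OF emeasure_eventually_const[OF assms] sets_eventually_const])
  qed auto
qed

end

section \<open>The two-product market\<close>

lemma emeasure_unit_interval_lessThan: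
  assumes "0 \<le> p" "p \<le> 1"
  shows "emeasure (uniform_measure lborel {0..1::real}) {..<p} = ennreal p"
proof -
  have "{0..1} \<inter> {..<p} = {0..<p}" using assms by auto
  then show ?thesis using assms by (simp add: divide_ennreal_def)
qed

lemma emeasure_unit_interval_atLeast:
  assumes "0 \<le> p" "p \<le> 1"
  shows "emeasure (uniform_measure lborel {0..1::real}) {p..} = ennreal (1 - p)"
proof -
  have "{0..1} \<inter> {p..} = {p..1}" using assms by auto
  then show ?thesis using assms by (simp add: divide_ennreal_def)
qed

lemma prob_space_unit_interval: "prob_space (uniform_measure lborel {0..1::real})"
  by (rule prob_space_uniform_measure) auto

interpretation unit_square: pair_prob_space "uniform_measure lborel {0..1::real}" "uniform_measure lborel {0..1::real}"
  by (simp add: pair_prob_space_def pair_sigma_finite_def prob_space_unit_interval prob_space_imp_sigma_finite)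

lemma prob_space_market_noise: "prob_space market_noise"
  unfolding market_noise_def by (rule unit_square.P.prob_space_axioms)

lemma space_market_noise: "space market_noise = UNIV"
  by (simp add: market_noise_def space_pair_measure)

lemma sets_market_noise[measurable_cong]: "sets market_noise = sets (borel \<Otimes>\<^sub>M borel)"
  unfolding market_noise_def by (intro sets_pair_measure_cong) simp_all

lemma emeasure_market_noise_Times:
  assumes "0 \<le> p" "p \<le> 1" "0 \<le> q" "q \<le> 1"
  shows "emeasure market_noise ({..<p} \<times> {..<q}) = ennreal (p * q)"
    and "emeasure market_noise ({..<p} \<times> {q..}) = ennreal (p * (1 - q))"
    and "emeasure market_noise ({p..} \<times> {..<q}) = ennreal ((1 - p) * q)"
    and "emeasure market_noise ({p..} \<times> {q..}) = ennreal ((1 - p) * (1 - q))"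
  using assms unfolding market_noise_def
  by (simp_all add: unit_square.M1.emeasure_pair_measure_Times emeasure_unit_interval_lessThan
      emeasure_unit_interval_atLeast ennreal_mult del: emeasure_uniform_measure)

locale quality_market =
  fixes v1 v2 A1 A2 q1 q2 :: real
  assumes visibility: "v2 \<le> v1" "0 < v2"
    and appeal: "0 < A1" "0 < A2"
    and quality: "q1 \<le> 1" "q2 < q1" "0 \<le> q2"
begin

abbreviation step :: "nat \<times> nat \<Rightarrow> real \<times> real \<Rightarrow> nat \<times> nat" where
  "step \<equiv> market_step v1 v2 A1 A2 q1 q2"

definition try1_prob :: "nat \<Rightarrow> nat \<Rightarrow> real" where
  "try1_prob d1 d2 = v1 * (A1 + real d1) / (v1 * (A1 + real d1) + v2 * (A2 + real d2))"

definition buy1_prob :: "nat \<Rightarrow> nat \<Rightarrow> real" where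
  "buy1_prob d1 d2 = try1_prob d1 d2 * q1"

definition buy2_prob :: "nat \<Rightarrow> nat \<Rightarrow> real" where
  "buy2_prob d1 d2 = (1 - try1_prob d1 d2) * q2"

lemma try1_prob_bounds: "0 < try1_prob d1 d2" "try1_prob d1 d2 < 1"
  using visibility appeal by (auto simp: try1_prob_def divide_less_eq add_pos_pos)

lemma buy_prob_bounds: "0 < buy1_prob d1 d2" "0 \<le> buy2_prob d1 d2" "buy1_prob d1 d2 + buy2_prob d1 d2 \<le> 1"
proof -
  have p: "0 < try1_prob d1 d2" "try1_prob d1 d2 < 1" by (rule try1_prob_bounds)+
  show "0 < buy1_prob d1 d2" "0 \<le> buy2_prob d1 d2"
    using p quality by (simp_all add: buy1_prob_def buy2_prob_def)
  have "try1_prob d1 d2 * q1 + (1 - try1_prob d1 d2) * q2 \<le> try1_prob d1 d2 * 1 + (1 - try1_prob d1 d2) * 1"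
    using p quality by (intro add_mono mult_left_mono) auto
  then show "buy1_prob d1 d2 + buy2_prob d1 d2 \<le> 1" by (simp add: buy1_prob_def buy2_prob_def)
qed

lemma step_eq:
  "step (d1, d2) x =
    (if fst x < try1_prob d1 d2 then (if snd x < q1 then (Suc d1, d2) else (d1, d2))
     else (if snd x < q2 then (d1, Suc d2) else (d1, d2)))"
  by (cases x) (simp add: try1_prob_def Let_def)

lemma measurable_step[measurable]: "step s \<in> market_noise \<rightarrow>\<^sub>M count_space UNIV"
proof -
  obtain d1 d2 where s: "s = (d1, d2)" by (cases s)
  show ?thesis unfolding s step_eq[abs_def] by measurable
qed

sublocale random_map_iteration market_noise step
  by (intro random_map_iteration.intro random_map_iteration_axioms.intro prob_space_market_noise measurable_step)

lemma orbit_eq_market_counts: "orbit (0, 0) \<omega> t = market_counts v1 v2 A1 A2 q1 q2 \<omega> t"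
  by (induction t) auto

lemma nn_integral_step:
  fixes g :: "nat \<times> nat \<Rightarrow> ennreal"
  shows "(\<integral>\<^sup>+x. g (step (d1, d2) x) \<partial>market_noise) =
    ennreal (buy1_prob d1 d2) * g (Suc d1, d2) + ennreal (buy2_prob d1 d2) * g (d1, Suc d2)
    + ennreal (1 - buy1_prob d1 d2 - buy2_prob d1 d2) * g (d1, d2)"
proof -
  let ?p = "try1_prob d1 d2"
  have p: "0 \<le> ?p" "?p \<le> 1" using try1_prob_bounds[of d1 d2] by auto
  have q: "0 \<le> q1" "q1 \<le> 1" "0 \<le> q2" "q2 \<le> 1" using quality by auto
  have cells: "g (step (d1, d2) x) =
      g (Suc d1, d2) * indicator ({..<?p} \<times> {..<q1}) x + g (d1, d2) * indicator ({..<?p} \<times> {q1..}) x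
      + g (d1, Suc d2) * indicator ({?p..} \<times> {..<q2}) x + g (d1, d2) * indicator ({?p..} \<times> {q2..}) x" for x
    by (simp only: step_eq) (auto simp: mem_Times_iff split: split_indicator)
  have no_purchase: "ennreal (?p * (1 - q1)) + ennreal ((1 - ?p) * (1 - q2))
      = ennreal (1 - buy1_prob d1 d2 - buy2_prob d1 d2)"
  proof -
    have "ennreal (?p * (1 - q1)) + ennreal ((1 - ?p) * (1 - q2)) = ennreal (?p * (1 - q1) + (1 - ?p) * (1 - q2))"
      using p q by (intro ennreal_plus[symmetric]) auto
    also have "?p * (1 - q1) + (1 - ?p) * (1 - q2) = 1 - buy1_prob d1 d2 - buy2_prob d1 d2"
      by (simp add: buy1_prob_def buy2_prob_def algebra_simps)
    finally show ?thesis .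
  qed
  have "(\<integral>\<^sup>+x. g (step (d1, d2) x) \<partial>market_noise) =
      ennreal (?p * q1) * g (Suc d1, d2) + ennreal ((1 - ?p) * q2) * g (d1, Suc d2)
      + (ennreal (?p * (1 - q1)) + ennreal ((1 - ?p) * (1 - q2))) * g (d1, d2)"
    using p q by (simp add: cells nn_integral_add nn_integral_cmult_indicator emeasure_market_noise_Times
        algebra_simps)
  then show ?thesis
    by (simp only: no_purchase buy1_prob_def buy2_prob_def)
qed

lemma prob_step_stays_lt_1: "prob {y\<in>space market_noise. step s y = s} < 1"
proof -
  obtain d1 d2 where s: "s = (d1, d2)" by (cases s)
  have "indicator {y\<in>space market_noise. step s y = s} y = (indicator {s} (step s y) :: ennreal)" for y
    by (simp add: space_market_noise split: split_indicator)
  then have "emeasure market_noise {y\<in>space market_noise. step s y = s}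
      = (\<integral>\<^sup>+y. indicator {s} (step s y) \<partial>market_noise)"
    by (simp flip: nn_integral_indicator)
  also have "\<dots> = ennreal (1 - buy1_prob d1 d2 - buy2_prob d1 d2)"
    unfolding s nn_integral_step by simp
  finally have "prob {y\<in>space market_noise. step s y = s} = 1 - buy1_prob d1 d2 - buy2_prob d1 d2"
    using buy_prob_bounds[of d1 d2] by (simp add: emeasure_eq_measure)
  then show ?thesis
    using buy_prob_bounds[of d1 d2] by simp
qed

section \<open>A Lyapunov function for the market\<close>

text \<open>
  \<open>\<theta>\<close> balances the drifts (\<open>w1 \<theta> = w2 \<rho>\<close>); capping \<open>\<rho>\<close> at \<open>w1 A1 / (2 (w2 + 1))\<close> ensures
  \<open>\<theta> \<le> A1 / 2\<close>, so that halving \<open>decay\<close> during its first \<open>k0\<close> steps is fast enough; from \<open>k0\<close> on,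
  \<open>decay d\<close> is proportional to \<open>(A1 + d) powr -\<gamma>\<close>, and \<open>k0\<close> is large enough for
  \<open>(a / (a + 1)) powr \<gamma> \<le> 1 - \<theta> / a\<close> when \<open>a \<ge> A1 + k0\<close>.
\<close>

definition w1 :: real where "w1 = v1 * q1"
definition w2 :: real where "w2 = v2 * q2"
definition rho :: real where "rho = min 1 (w1 * A1 / (2 * (w2 + 1)))"
definition theta :: real where "theta = w2 * rho / w1"
definition gamma :: real where "gamma = (theta + rho) / 2"
definition k0 :: nat where "k0 = nat \<lceil>theta / (gamma - theta)\<rceil>"

definition decay :: "nat \<Rightarrow> real" where
  "decay d = (1/2) ^ min d k0 * ((A1 + real k0) / (A1 + real (max d k0))) powr gamma"

definition lyapunov :: "nat \<times> nat \<Rightarrow> real" where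
  "lyapunov s = (A2 + real (snd s)) powr rho * decay (fst s)"

lemma weight_bounds: "0 < w1" "0 \<le> w2" "w2 < w1"
proof -
  show "0 < w1" "0 \<le> w2" unfolding w1_def w2_def using visibility quality by simp_all
  have "v2 * q2 \<le> v1 * q2" using visibility quality by (intro mult_right_mono) auto
  also have "\<dots> < v1 * q1" using visibility quality by simp
  finally show "w2 < w1" unfolding w1_def w2_def .
qed

lemma rho_bounds: "0 < rho" "rho \<le> 1" "w2 * rho \<le> w1 * A1 / 2"
proof -
  show "0 < rho" "rho \<le> 1" unfolding rho_def using weight_bounds appeal by simp_all
  have "w2 * rho \<le> w2 * (w1 * A1 / (2 * (w2 + 1)))"
    unfolding rho_def using weight_bounds by (intro mult_left_mono) auto
  also have "\<dots> = (w1 * A1 / 2) * (w2 / (w2 + 1))" using weight_bounds by (simp add: field_simps)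
  also have "\<dots> \<le> (w1 * A1 / 2) * 1" using weight_bounds appeal by (intro mult_left_mono) auto
  finally show "w2 * rho \<le> w1 * A1 / 2" by simp
qed

lemma theta_bounds: "0 \<le> theta" "theta < rho" "theta \<le> A1 / 2"
  unfolding theta_def using weight_bounds rho_bounds
  by (simp_all add: divide_less_eq divide_le_eq mult.commute)

lemma gamma_bounds: "theta < gamma" "gamma < rho"
  using theta_bounds unfolding gamma_def by auto

lemma decay_pos: "0 < decay d"
  unfolding decay_def using appeal by simp

lemma decay_Suc_le: "decay (Suc d) \<le> decay d * (1 - theta / (A1 + real d))"
proof (cases "d < k0")
  case True
  have "theta / (A1 + real d) \<le> (A1 / 2) / (A1 + real d)"
    using theta_bounds appeal by (intro divide_right_mono) auto
  also have "\<dots> \<le> 1 / 2" using appeal by (simp add: divide_le_eq)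
  finally have "1 / 2 \<le> 1 - theta / (A1 + real d)" by simp
  moreover have "decay d = (1/2) ^ d" "decay (Suc d) = (1/2) ^ d * (1/2)"
    unfolding decay_def using True appeal by (simp_all add: max_def min_def)
  ultimately show ?thesis by (simp only:) (rule mult_left_mono, simp_all)
next
  case False
  let ?a = "A1 + real d" and ?c = "A1 + real k0"
  have a: "0 < ?a" and c: "0 < ?c" using appeal by simp_all
  have "decay (Suc d) = (1/2) ^ k0 * (?c / ?a * (?a / (?a + 1))) powr gamma"
    unfolding decay_def using False a by (simp add: max_def min_def add_ac)
  also have "\<dots> = (1/2) ^ k0 * ((?c / ?a) powr gamma * (?a / (?a + 1)) powr gamma)"
    using a c by (subst powr_mult) auto
  also have "\<dots> = decay d * (?a / (?a + 1)) powr gamma"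
    unfolding decay_def using False by (simp add: max_def min_def)
  also have "\<dots> \<le> decay d * (1 - theta / ?a)"
  proof (rule mult_left_mono)
    have "(?a / (?a + 1)) powr gamma = (1 + (- 1 / (?a + 1))) powr gamma"
      using a by (simp add: field_simps)
    also have "\<dots> \<le> 1 + gamma * (- 1 / (?a + 1))"
      using a gamma_bounds theta_bounds rho_bounds by (intro powr_le_Bernoulli) (auto simp: field_simps)
    also have "\<dots> \<le> 1 - theta / ?a"
    proof -
      have "theta / (gamma - theta) \<le> ?a"
        using False appeal unfolding k0_def by linarith
      then have "theta * (?a + 1) \<le> gamma * ?a"
        using gamma_bounds by (simp add: divide_le_eq algebra_simps)
      then show ?thesis
        using a by (simp add: field_simps)
    qed
    finally show "(?a / (?a + 1)) powr gamma \<le> 1 - theta / ?a" .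
  qed (use decay_pos in \<open>simp add: less_imp_le\<close>)
  finally show ?thesis .
qed

lemma lyapunov_nonneg: "0 \<le> lyapunov s"
  unfolding lyapunov_def using decay_pos[of "fst s"] by simp

lemma buy_drift_balance:
  "buy1_prob d1 d2 * theta / (A1 + real d1) = buy2_prob d1 d2 * rho / (A2 + real d2)"
proof -
  define a1 a2 where "a1 = A1 + real d1" and "a2 = A2 + real d2"
  define D where "D = v1 * a1 + v2 * a2"
  have "0 < D" unfolding D_def a1_def a2_def using visibility appeal by (simp add: add_pos_pos)
  then have nz: "D \<noteq> 0" "a1 \<noteq> 0" "a2 \<noteq> 0" "v1 * q1 \<noteq> 0"
    using appeal weight_bounds unfolding a1_def a2_def w1_def by auto
  have try1: "try1_prob d1 d2 = v1 * a1 / D"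
    unfolding try1_prob_def D_def a1_def a2_def ..
  have balance1: "buy1_prob d1 d2 * theta / a1 = w2 * rho / D"
    using nz unfolding buy1_prob_def try1 theta_def w1_def by (simp add: field_simps)
  have try2: "1 - try1_prob d1 d2 = v2 * a2 / D"
    using nz unfolding try1 D_def by (simp add: field_simps)
  have balance2: "buy2_prob d1 d2 * rho / a2 = w2 * rho / D"
    using nz unfolding buy2_prob_def try2 w2_def by (simp add: field_simps)
  show ?thesis using balance1 balance2 unfolding a1_def a2_def by simp
qed

lemma lyapunov_supermartingale:
  "buy1_prob d1 d2 * lyapunov (Suc d1, d2) + buy2_prob d1 d2 * lyapunov (d1, Suc d2)
    + (1 - buy1_prob d1 d2 - buy2_prob d1 d2) * lyapunov (d1, d2) \<le> lyapunov (d1, d2)"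
proof -
  let ?a1 = "A1 + real d1" and ?a2 = "A2 + real d2" and ?X = "lyapunov (d1, d2)"
  have a2: "0 < ?a2" using appeal by simp
  have X: "?X = ?a2 powr rho * decay d1" unfolding lyapunov_def by simp
  have up1: "lyapunov (Suc d1, d2) \<le> ?X - ?X * theta / ?a1"
  proof -
    have "lyapunov (Suc d1, d2) \<le> ?a2 powr rho * (decay d1 * (1 - theta / ?a1))"
      unfolding lyapunov_def by (simp add: mult_left_mono decay_Suc_le)
    then show ?thesis by (simp add: X algebra_simps)
  qed
  have up2: "lyapunov (d1, Suc d2) \<le> ?X + ?X * rho / ?a2"
  proof -
    have "?a2 + 1 = ?a2 * (1 + 1 / ?a2)"
      using a2 by (simp add: field_simps)
    then have "(?a2 + 1) powr rho = ?a2 powr rho * (1 + 1 / ?a2) powr rho"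
      using a2 by (simp add: powr_mult)
    also have "\<dots> \<le> ?a2 powr rho * (1 + rho * (1 / ?a2))"
    proof -
      have "0 < 1 / ?a2" using a2 by simp
      then have "-1 < 1 / ?a2" by linarith
      with rho_bounds show ?thesis by (intro mult_left_mono powr_le_Bernoulli) auto
    qed
    finally have "(?a2 + 1) powr rho * decay d1 \<le> ?a2 powr rho * (1 + rho * (1 / ?a2)) * decay d1"
      using decay_pos[of d1] by (intro mult_right_mono) auto
    then show ?thesis by (simp add: lyapunov_def algebra_simps)
  qed
  have b: "0 \<le> buy1_prob d1 d2" "0 \<le> buy2_prob d1 d2" "0 \<le> 1 - buy1_prob d1 d2 - buy2_prob d1 d2"
    using buy_prob_bounds[of d1 d2] by auto
  have "buy1_prob d1 d2 * lyapunov (Suc d1, d2) + buy2_prob d1 d2 * lyapunov (d1, Suc d2)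
      + (1 - buy1_prob d1 d2 - buy2_prob d1 d2) * ?X
    \<le> buy1_prob d1 d2 * (?X - ?X * theta / ?a1) + buy2_prob d1 d2 * (?X + ?X * rho / ?a2)
      + (1 - buy1_prob d1 d2 - buy2_prob d1 d2) * ?X"
    using b up1 up2 by (intro add_mono mult_left_mono order_refl)
  also have "\<dots> = ?X - ?X * (buy1_prob d1 d2 * theta / ?a1 - buy2_prob d1 d2 * rho / ?a2)"
    by (simp add: algebra_simps)
  finally show ?thesis by (simp add: buy_drift_balance)
qed

lemma nn_integral_lyapunov_le:
  "(\<integral>\<^sup>+y. ennreal (lyapunov (step s y)) \<partial>market_noise) \<le> ennreal (lyapunov s)"
proof -
  obtain d1 d2 where s: "s = (d1, d2)" by (cases s)
  have b: "0 \<le> buy1_prob d1 d2" "0 \<le> buy2_prob d1 d2" "0 \<le> 1 - buy1_prob d1 d2 - buy2_prob d1 d2"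
    using buy_prob_bounds[of d1 d2] by auto
  have "(\<integral>\<^sup>+y. ennreal (lyapunov (step s y)) \<partial>market_noise)
      = ennreal (buy1_prob d1 d2 * lyapunov (Suc d1, d2) + buy2_prob d1 d2 * lyapunov (d1, Suc d2)
        + (1 - buy1_prob d1 d2 - buy2_prob d1 d2) * lyapunov (d1, d2))"
    using b unfolding s nn_integral_step[where g="\<lambda>s. ennreal (lyapunov s)"]
    by (simp add: ennreal_mult lyapunov_nonneg)
  also have "\<dots> \<le> ennreal (lyapunov s)"
    unfolding s by (intro ennreal_leI lyapunov_supermartingale)
  finally show ?thesis .
qed

lemma decay_antimono: "d \<le> d' \<Longrightarrow> decay d' \<le> decay d"
proof (induction d' rule: dec_induct)
  case (step d')
  have "decay (Suc d') \<le> decay d' * (1 - theta / (A1 + real d'))"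
    by (rule decay_Suc_le)
  also have "\<dots> \<le> decay d'"
    using decay_pos[of d'] theta_bounds appeal by (simp add: mult_le_cancel_left1)
  finally show ?case using step.IH by simp
qed simp

lemma decay_eq_powr: "k0 \<le> d \<Longrightarrow> decay d = (1/2) ^ k0 * (A1 + real k0) powr gamma * (A1 + real d) powr (- gamma)"
  unfolding decay_def using appeal by (simp add: max_def min_def powr_divide powr_minus_divide)

lemma appeal2_lt_of_lyapunov_lt:
  assumes "lyapunov (d1, d2) < B"
  shows "A2 + real d2 < (B / decay d1) powr (1 / rho)"
proof -
  have "(A2 + real d2) powr rho < B / decay d1"
    using assms decay_pos[of d1] by (simp add: lyapunov_def pos_less_divide_eq)
  then have "((A2 + real d2) powr rho) powr (1 / rho) < (B / decay d1) powr (1 / rho)"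
    using rho_bounds by (intro powr_less_mono2) auto
  then show ?thesis
    using rho_bounds appeal by (simp add: powr_powr)
qed

lemma orbit_incseq: "incseq (\<lambda>t. fst (orbit s \<omega> t))" "incseq (\<lambda>t. snd (orbit s \<omega> t))"
proof -
  have "fst (orbit s \<omega> t) \<le> fst (orbit s \<omega> (Suc t)) \<and> snd (orbit s \<omega> t) \<le> snd (orbit s \<omega> (Suc t))" for t
    by (cases "orbit s \<omega> t") (simp add: step_eq)
  then show "incseq (\<lambda>t. fst (orbit s \<omega> t))" "incseq (\<lambda>t. snd (orbit s \<omega> t))"
    by (auto intro: incseq_SucI)
qed

lemma snd_lt_if_lyapunov_lt_fst_le:
  assumes "lyapunov (d1, d2) < B" "d1 \<le> m"
  shows "real d2 < (B / decay m) powr (1 / rho)"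
proof -
  have "0 < B"
    using assms(1) lyapunov_nonneg[of "(d1, d2)"] by linarith
  then have "B / decay d1 \<le> B / decay m" "0 < B / decay d1"
    using decay_antimono[OF assms(2)] decay_pos by (auto intro: divide_left_mono)
  then have "(B / decay d1) powr (1 / rho) \<le> (B / decay m) powr (1 / rho)"
    using rho_bounds by (intro powr_mono2) auto
  then show ?thesis
    using appeal2_lt_of_lyapunov_lt[OF assms(1)] appeal by linarith
qed

lemma snd_le_powr_fst_if_lyapunov_lt:
  "\<exists>K. \<forall>d1 d2. lyapunov (d1, d2) < B \<longrightarrow> max k0 1 \<le> d1 \<longrightarrow> real d2 \<le> K * real d1 powr (gamma / rho)"
proof (intro exI allI impI)
  define C where "C = (1/2) ^ k0 * (A1 + real k0) powr gamma"
  fix d1 d2 assume lt: "lyapunov (d1, d2) < B" and d1: "max k0 1 \<le> d1"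
  have C: "0 < C" unfolding C_def using appeal by simp
  have B: "0 < B" using lt lyapunov_nonneg[of "(d1, d2)"] by linarith
  have "B / decay d1 = B / C * (A1 + real d1) powr gamma"
    using d1 C appeal by (simp add: decay_eq_powr C_def powr_minus field_simps)
  then have "A2 + real d2 < (B / C * (A1 + real d1) powr gamma) powr (1 / rho)"
    using appeal2_lt_of_lyapunov_lt[OF lt] by simp
  also have "\<dots> = (B / C) powr (1 / rho) * (A1 + real d1) powr (gamma / rho)"
    using B C appeal by (subst powr_mult) (simp_all add: powr_powr)
  also have "\<dots> \<le> (B / C) powr (1 / rho) * ((A1 + 1) * real d1) powr (gamma / rho)"
    using d1 appeal gamma_bounds theta_bounds rho_bounds
    by (intro mult_left_mono powr_mono2) (auto simp: algebra_simps)
  also have "\<dots> = (B / C) powr (1 / rho) * (A1 + 1) powr (gamma / rho) * real d1 powr (gamma / rho)"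
    using appeal by (simp add: powr_mult)
  finally show "real d2 \<le> (B / C) powr (1 / rho) * (A1 + 1) powr (gamma / rho) * real d1 powr (gamma / rho)"
    using appeal by linarith
qed

lemma fst_orbit_tendsto_at_top:
  assumes moving: "\<forall>T. \<exists>t\<ge>T. orbit s \<omega> t \<noteq> orbit s \<omega> T"
    and bounded: "\<forall>t. lyapunov (orbit s \<omega> t) < B"
  shows "filterlim (\<lambda>t. real (fst (orbit s \<omega> t))) at_top sequentially"
proof -
  define x y where "x t = fst (orbit s \<omega> t)" and "y t = snd (orbit s \<omega> t)" for t
  have mono: "incseq x" "incseq y"
    using orbit_incseq unfolding x_def y_def by auto
  have x_unbounded: "\<exists>t. m \<le> x t" for m
  proof (rule ccontr)
    let ?C = "(B / decay m) powr (1 / rho)"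
    assume "\<not> (\<exists>t. m \<le> x t)"
    then have x_le: "x t \<le> m" for t by (meson nle_le)
    obtain t where "m + nat \<lceil>?C\<rceil> \<le> x t + y t"
      using incseq_pair_sum_unbounded[OF mono] moving unfolding x_def y_def by (metis prod.collapse)
    then have "?C \<le> real (y t)"
      using x_le[of t] by linarith
    moreover have "real (y t) < ?C"
      using bounded x_le snd_lt_if_lyapunov_lt_fst_le unfolding x_def y_def by (metis prod.collapse)
    ultimately show False by simp
  qed
  show ?thesis
    unfolding filterlim_at_top x_def[symmetric]
  proof
    fix Z :: real
    obtain t0 where t0: "nat \<lceil>Z\<rceil> \<le> x t0" using x_unbounded by blast
    have "Z \<le> real (x t)" if "t0 \<le> t" for t
      using t0 monoD[OF mono(1) that] by linarith
    then show "eventually (\<lambda>t. Z \<le> real (x t)) sequentially"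
      by (rule eventually_sequentiallyI)
  qed
qed

lemma share_tendsto_1_if_moving_and_bounded:
  assumes moving: "\<forall>T. \<exists>t\<ge>T. orbit s \<omega> t \<noteq> orbit s \<omega> T"
    and bounded: "\<forall>t. lyapunov (orbit s \<omega> t) < B"
  shows "(\<lambda>t. real (fst (orbit s \<omega> t)) / (real (fst (orbit s \<omega> t)) + real (snd (orbit s \<omega> t)))) \<longlonglongrightarrow> 1"
proof -
  have x_lim: "filterlim (\<lambda>t. real (fst (orbit s \<omega> t))) at_top sequentially"
    using moving bounded by (rule fst_orbit_tendsto_at_top)
  obtain K where K: "\<And>d1 d2. lyapunov (d1, d2) < B \<Longrightarrow> max k0 1 \<le> d1 \<Longrightarrow> real d2 \<le> K * real d1 powr (gamma / rho)"
    using snd_le_powr_fst_if_lyapunov_lt by blast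
  have "eventually (\<lambda>t. real (max k0 1) \<le> real (fst (orbit s \<omega> t))) sequentially"
    using x_lim unfolding filterlim_at_top by blast
  then have "eventually (\<lambda>t. 0 \<le> real (snd (orbit s \<omega> t)) \<and>
      real (snd (orbit s \<omega> t)) \<le> K * real (fst (orbit s \<omega> t)) powr (gamma / rho)) sequentially"
    by eventually_elim (use K bounded in \<open>simp add: of_nat_le_iff\<close>)
  moreover have "gamma / rho < 1"
    using gamma_bounds rho_bounds by simp
  ultimately show ?thesis
    by (rule share_tendsto_1[OF x_lim])
qed

end

theorem mainTheorem5:
  fixes v1 v2 A1 A2 q1 q2 :: real
  assumes "v1 \<ge> v2" "v2 > 0" "A1 > 0" "A2 > 0" "q1 \<le> 1" "q2 < q1" "q2 \<ge> 0"
  shows "AE \<omega> in stream_space market_noise.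
           (\<lambda>t. real (fst (market_counts v1 v2 A1 A2 q1 q2 \<omega> t)) /
                 (real (fst (market_counts v1 v2 A1 A2 q1 q2 \<omega> t))
                  + real (snd (market_counts v1 v2 A1 A2 q1 q2 \<omega> t)))) \<longlonglongrightarrow> 1"
proof -
  interpret quality_market v1 v2 A1 A2 q1 q2
    by unfold_locales (use assms in auto)
  have "AE \<omega> in stream_space market_noise.
      (\<lambda>t. real (fst (orbit (0, 0) \<omega> t)) /
        (real (fst (orbit (0, 0) \<omega> t)) + real (snd (orbit (0, 0) \<omega> t)))) \<longlonglongrightarrow> 1"
    using AE_orbit_not_eventually_const[OF prob_step_stays_lt_1]
      AE_orbit_bounded[OF lyapunov_nonneg nn_integral_lyapunov_le]
    by eventually_elim (blast intro: share_tendsto_1_if_moving_and_bounded)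
  then show ?thesis
    by (simp only: orbit_eq_market_counts)
qed

end
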